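(* Let $(X,\delta)$ be a metric space, $O\in X$ a depot, and $\ell(y)=\delta(O,y)$ for $y\in X$. Let $\lambda,\epsilon>0$ with $\lambda+\epsilon<1$. Let $T=(O,y_1,y_2,\dots,y_m,O)$ be a tour with $m\ge 1$ distinct points $y_1,\dots,y_m\in X$, let $L=\frac1m\sum_{j=1}^m\ell(y_j)$ and $\Delta=\max_{1\le j\le m}\ell(y_j)-L$. Then there exists a set $W\subseteq\{y_1,\dots,y_m\}$ with $|W|>(\lambda+\epsilon)m-1$ such that $$\mathrm{cost}(T)\ \ge\ 2\Big(L-\frac{\lambda+\epsilon}{1-\lambda-\epsilon}\,\Delta\Big)+\sum_{x\in W}\delta\big(x,W\setminus\{x\}\big).$$
   Context: $\mathrm{cost}(T)=\delta(O,y_1)+\sum_{j=1}^{m-1}\delta(y_j,y_{j+1})+\delta(y_m,O)$. For a point $x$ and a set $A$, $\delta(x,A)=\min_{a\in A}\delta(x,a)$, with the convention $\delta(x,\emptyset)=0$. *)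

theory Defs
  imports "HOL-Analysis.Analysis"
begin

definition dist_set :: "'a::metric_space \<Rightarrow> 'a set \<Rightarrow> real" where
  "dist_set x A = (if A = {} then 0 else Min ((\<lambda>a. dist x a) ` A))"

definition tour_cost :: "'a::metric_space \<Rightarrow> 'a list \<Rightarrow> real" where
  "tour_cost Dp ys = dist Dp (ys ! 0) + (\<Sum>j<length ys - 1. dist (ys ! j) (ys ! (j + 1)))
      + dist (ys ! (length ys - 1)) Dp"

end

(*
  Call a point far if its distance to the depot is at least t = L - mu/(1 - mu) Delta, where
  mu = lam + eps. Every point exceeds the mean L by at most Delta, so the points below t cannot
  make up a (1 - mu)-fraction: more than mu m points are far. Shortcutting the tour to the far
  points in tour order costs at least 2 t plus the length of the path through them. In a path
  whose points are charged to a path neighbour, the nearest-neighbour distances sum to at most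
  the path length plus one freely chosen edge; dropping the endpoint at the longer of the two
  end edges and choosing the other end edge leaves a set W of size (number of far points) - 1
  whose nearest-neighbour sum is at most the path length.
*)
theory Submission
  imports Defs "HOL-Library.Sublist"
begin

fun walk_length :: "'a::metric_space \<Rightarrow> 'a list \<Rightarrow> 'a \<Rightarrow> real" where
  "walk_length a [] b = dist a b"
| "walk_length a (x # xs) b = dist a x + walk_length x xs b"

definition path_length :: "'a::metric_space list \<Rightarrow> real" where
  "path_length xs = (\<Sum>i<length xs - 1. dist (xs ! i) (xs ! Suc i))"

lemma path_length_Cons_Cons: "path_length (x # y # zs) = dist x y + path_length (y # zs)"
  unfolding path_length_def by (simp add: sum.lessThan_Suc_shift del: sum.lessThan_Suc)

lemma walk_length_conv_path_length:
  "xs \<noteq> [] \<Longrightarrow> walk_length a xs b = dist a (hd xs) + path_length xs + dist (last xs) b"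
proof (induction xs arbitrary: a)
  case (Cons x xs)
  show ?case
  proof (cases xs)
    case Nil
    then show ?thesis by (simp add: path_length_def)
  next
    case (Cons y ys)
    then show ?thesis using Cons.IH[of x] by (simp add: path_length_Cons_Cons)
  qed
qed simp

lemma tour_cost_eq_walk_length: "ys \<noteq> [] \<Longrightarrow> tour_cost Dp ys = walk_length Dp ys Dp"
  by (simp add: walk_length_conv_path_length tour_cost_def path_length_def hd_conv_nth last_conv_nth)

lemma dist_le_walk_length: "dist a b \<le> walk_length a xs b"
proof (induction xs arbitrary: a)
  case (Cons x xs)
  show ?case using dist_triangle[of a b x] Cons.IH[of x] by simp
qed simp

lemma walk_length_le_detour: "walk_length a xs b \<le> dist a y + walk_length y xs b"
  by (cases xs) (auto intro: dist_triangle)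

lemma walk_length_subseq_le: "subseq xs ys \<Longrightarrow> walk_length a xs b \<le> walk_length a ys b"
proof (induction arbitrary: a rule: list_emb.induct)
  case (list_emb_Nil ys)
  show ?case using dist_le_walk_length by simp
next
  case (list_emb_Cons xs ys y)
  show ?case using list_emb_Cons.IH[of a] walk_length_le_detour[of a ys b y] by simp
next
  case (list_emb_Cons2 x y xs ys)
  then show ?case by simp
qed

lemma path_length_nonneg: "0 \<le> path_length xs"
  unfolding path_length_def by (simp add: sum_nonneg)

lemma path_length_butlast:
  assumes "2 \<le> length zs"
  shows "path_length zs
    = path_length (butlast zs) + dist (zs ! (length zs - 2)) (zs ! (length zs - 1))"
proof -
  obtain k where k: "length zs = Suc (Suc k)"
    using assms by (metis add_2_eq_Suc le_Suc_ex)
  then show ?thesis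
    unfolding path_length_def by (simp add: nth_butlast)
qed

definition nearest_neighbour_sum :: "'a::metric_space set \<Rightarrow> real" where
  "nearest_neighbour_sum W = (\<Sum>x\<in>W. dist_set x (W - {x}))"

lemma dist_set_le: "finite A \<Longrightarrow> a \<in> A \<Longrightarrow> dist_set x A \<le> dist x a"
  unfolding dist_set_def by auto

lemma nearest_neighbour_sum_card_le_1:
  "finite W \<Longrightarrow> card W \<le> 1 \<Longrightarrow> nearest_neighbour_sum W = 0"
  unfolding nearest_neighbour_sum_def dist_set_def
  by (intro sum.neutral) (auto simp: card_le_Suc0_iff_eq)

lemma nearest_neighbour_sum_le_path_length_plus_edge:
  assumes "distinct zs" and j: "Suc j < length zs"
  shows "nearest_neighbour_sum (set zs) \<le> path_length zs + dist (zs ! j) (zs ! Suc j)"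
proof -
  define n where "n = length zs"
  define d where "d i = dist (zs ! i) (zs ! Suc i)" for i
  \<comment> \<open>Charge points up to j to their successor and later points to their predecessor:
    edge j is then paid twice and every other edge once.\<close>
  define g where "g i = (if i \<le> j then Suc i else i - 1)" for i
  have "nearest_neighbour_sum (set zs) = (\<Sum>i<n. dist_set (zs ! i) (set zs - {zs ! i}))"
    unfolding nearest_neighbour_sum_def n_def
    by (rule sum.reindex_bij_betw[OF bij_betw_nth[OF assms(1) refl refl], symmetric])
  also have "\<dots> \<le> (\<Sum>i<n. dist (zs ! i) (zs ! g i))"
  proof (rule sum_mono)
    fix i assume "i \<in> {..<n}"
    then have "g i < n" "g i \<noteq> i" "i < n" using j by (auto simp: g_def n_def)
    then have "zs ! g i \<in> set zs - {zs ! i}"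
      using assms(1) by (auto simp: n_def nth_eq_iff_index_eq)
    then show "dist_set (zs ! i) (set zs - {zs ! i}) \<le> dist (zs ! i) (zs ! g i)"
      by (intro dist_set_le) auto
  qed
  also have "(\<Sum>i<n. dist (zs ! i) (zs ! g i))
      = (\<Sum>i<Suc j. d i) + (\<Sum>i\<in>{Suc j..<n}. d (i - 1))"
  proof -
    have "{..<n} = {..<Suc j} \<union> {Suc j..<n}" using j by (auto simp: n_def)
    moreover have "(\<Sum>i<Suc j. dist (zs ! i) (zs ! g i)) = (\<Sum>i<Suc j. d i)"
      by (rule sum.cong) (auto simp: g_def d_def)
    moreover have "(\<Sum>i\<in>{Suc j..<n}. dist (zs ! i) (zs ! g i)) = (\<Sum>i\<in>{Suc j..<n}. d (i - 1))"
      by (rule sum.cong) (auto simp: g_def d_def dist_commute)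
    ultimately show ?thesis
      by (simp add: sum.union_disjoint ivl_disj_int del: sum.lessThan_Suc)
  qed
  also have "(\<Sum>i\<in>{Suc j..<n}. d (i - 1)) = (\<Sum>i\<in>{j..<n - 1}. d i)"
  proof -
    obtain n' where "n = Suc n'" using j by (cases n) (auto simp: n_def)
    then show ?thesis using sum.shift_bounds_Suc_ivl[of "\<lambda>i. d (i - 1)" j n'] by simp
  qed
  also have "(\<Sum>i<Suc j. d i) + (\<Sum>i\<in>{j..<n - 1}. d i) = path_length zs + d j"
    using sum.atLeastLessThan_concat[of 0 j "n - 1" d] j
    by (simp add: path_length_def n_def d_def atLeast0LessThan)
  finally show ?thesis unfolding d_def .
qed

lemma exists_nearest_neighbour_sum_le_path_length:
  assumes "distinct zs"
  obtains W where "W \<subseteq> set zs" "card W = length zs - 1"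
    "nearest_neighbour_sum W \<le> path_length zs"
proof (cases "length zs \<le> 2")
  case True
  have "card (set (butlast zs)) = length zs - 1"
    using assms by (simp add: distinct_card distinct_butlast)
  then show ?thesis
    using True path_length_nonneg nearest_neighbour_sum_card_le_1[of "set (butlast zs)"]
    by (intro that[of "set (butlast zs)"]) (auto dest: in_set_butlastD)
next
  case False
  define n where "n = length zs"
  define first_edge where "first_edge = dist (zs ! 0) (zs ! 1)"
  define last_edge where "last_edge = dist (zs ! (n - 2)) (zs ! (n - 1))"
  have n: "3 \<le> n" using False by (simp add: n_def)
  have path_tl: "path_length zs = first_edge + path_length (tl zs)"
    using n unfolding n_def first_edge_def
    by (cases zs rule: remdups_adj.cases) (auto simp: path_length_Cons_Cons)
  have path_butlast: "path_length zs = path_length (butlast zs) + last_edge"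
    using path_length_butlast[of zs] n by (simp add: n_def last_edge_def)
  show ?thesis
  proof (cases "first_edge \<le> last_edge")
    case True
    have "nearest_neighbour_sum (set (butlast zs))
        \<le> path_length (butlast zs) + dist (butlast zs ! 0) (butlast zs ! Suc 0)"
      using n assms by (intro nearest_neighbour_sum_le_path_length_plus_edge)
        (auto simp: n_def distinct_butlast)
    also have "\<dots> = path_length zs - last_edge + first_edge"
      using n path_butlast by (simp add: nth_butlast n_def first_edge_def)
    finally show ?thesis
      using True assms by (intro that[of "set (butlast zs)"])
        (auto simp: distinct_card distinct_butlast dest: in_set_butlastD)
  next
    case False
    have "nearest_neighbour_sum (set (tl zs))
        \<le> path_length (tl zs) + dist (tl zs ! (n - 3)) (tl zs ! Suc (n - 3))"
      using n assms by (intro nearest_neighbour_sum_le_path_length_plus_edge)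
        (auto simp: n_def distinct_tl)
    also have "\<dots> = path_length zs - first_edge + last_edge"
      using n path_tl by (simp add: nth_tl n_def last_edge_def numeral_eq_Suc Suc_diff_Suc)
    finally have "nearest_neighbour_sum (set (tl zs)) \<le> path_length zs - first_edge + last_edge" .
    moreover have "set (tl zs) \<subseteq> set zs" by (cases zs) auto
    ultimately show ?thesis
      using False assms by (intro that[of "set (tl zs)"]) (auto simp: distinct_card distinct_tl)
  qed
qed

lemma card_ge_mean_threshold_gt:
  fixes l :: "'a \<Rightarrow> real" and mu :: real
  assumes I: "finite I" "I \<noteq> {}" and mu: "0 < mu" "mu < 1"
  defines "L \<equiv> (\<Sum>x\<in>I. l x) / card I"
  assumes le_max: "\<And>x. x \<in> I \<Longrightarrow> l x \<le> L + Delta"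
  shows "mu * card I < card {x\<in>I. L - mu / (1 - mu) * Delta \<le> l x}"
proof -
  define t where "t = L - mu / (1 - mu) * Delta"
  define J where "J = {x\<in>I. t \<le> l x}"
  define A where "A = I - J"
  have n: "card I > 0" using I by (simp add: card_gt_0_iff)
  have sum_I: "(\<Sum>x\<in>I. l x) = card I * L" using n by (simp add: L_def)
  have partition: "I = A \<union> J" "A \<inter> J = {}" "finite A" "finite J"
    using I by (auto simp: A_def J_def)
  have sum_split: "(\<Sum>x\<in>I. l x) = (\<Sum>x\<in>A. l x) + (\<Sum>x\<in>J. l x)"
    using partition by (metis sum.union_disjoint)
  have card_split: "card I = card A + card J"
    using partition by (metis card_Un_disjoint)
  have "card I * L \<le> card I * (L + Delta)"
    using sum_mono[of I l "\<lambda>_. L + Delta"] le_max sum_I by simp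
  then have Delta: "0 \<le> Delta" using n by simp
  have sum_J: "(\<Sum>x\<in>J. l x) \<le> card J * (L + Delta)"
    using sum_mono[of J l "\<lambda>_. L + Delta"] le_max by (simp add: J_def)
  show ?thesis
  proof (cases "A = {}")
    case True
    then show ?thesis using card_split n mu by (simp add: J_def t_def)
  next
    case False
    have "(\<Sum>x\<in>A. l x) < (\<Sum>x\<in>A. t)"
      using I False by (intro sum_strict_mono) (auto simp: A_def J_def)
    then have "card I * L < card A * t + card J * (L + Delta)"
      using sum_I sum_split sum_J by simp
    then have "card A * (mu / (1 - mu)) * Delta < card J * Delta"
      using card_split by (simp add: t_def algebra_simps)
    then have "card A * (mu / (1 - mu)) < card J"
      using Delta by (metis mult.commute mult_less_cancel_left_pos mult_not_zero order_le_less
          order_less_irrefl)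
    then have "card A * mu < card J * (1 - mu)"
      using mu by (simp add: field_simps)
    then show ?thesis
      unfolding t_def[symmetric] J_def[symmetric] using card_split by (simp add: algebra_simps)
  qed
qed

lemma tour_cost_ge_path_through_far_points:
  fixes Dp :: "'a::metric_space" and ys :: "'a list" and t :: real
  defines "zs \<equiv> filter (\<lambda>y. t \<le> dist Dp y) ys"
  assumes "zs \<noteq> []"
  shows "2 * t + path_length zs \<le> tour_cost Dp ys"
proof -
  have "t \<le> dist Dp (hd zs)" "t \<le> dist Dp (last zs)"
    using hd_in_set[OF assms(2)] last_in_set[OF assms(2)] by (simp_all add: zs_def)
  then have "2 * t + path_length zs \<le> walk_length Dp zs Dp"
    using assms(2) by (simp add: walk_length_conv_path_length dist_commute)
  also have "\<dots> \<le> walk_length Dp ys Dp"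
    unfolding zs_def by (rule walk_length_subseq_le[OF subseq_filter_left])
  also have "\<dots> = tour_cost Dp ys"
    using assms(2) by (intro tour_cost_eq_walk_length[symmetric]) (auto simp: zs_def)
  finally show ?thesis .
qed

theorem lemma9:
  fixes Dp :: "'a::metric_space" and ys :: "'a list" and lam eps :: real
  assumes "lam > 0" and "eps > 0" and "lam + eps < 1"
    and "length ys \<ge> 1" and "distinct ys"
  defines "m \<equiv> length ys"
  defines "L \<equiv> (\<Sum>j<m. dist Dp (ys ! j)) / real m"
  defines "Delta \<equiv> Max ((\<lambda>j. dist Dp (ys ! j)) ` {..<m}) - L"
  shows "\<exists>W. W \<subseteq> set ys \<and> real (card W) > (lam + eps) * real m - 1 \<and>
    tour_cost Dp ys \<ge> 2 * (L - (lam + eps) / (1 - lam - eps) * Delta)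
                      + (\<Sum>x\<in>W. dist_set x (W - {x}))"
proof -
  define mu where "mu = lam + eps"
  define t where "t = L - mu / (1 - mu) * Delta"
  define zs where "zs = filter (\<lambda>y. t \<le> dist Dp y) ys"
  have mu: "0 < mu" "mu < 1" using assms(1-3) by (simp_all add: mu_def)
  have ys: "ys \<noteq> []" "card (set ys) = m"
    using assms(4,5) by (auto simp: m_def distinct_card)
  have L: "L = (\<Sum>y\<in>set ys. dist Dp y) / card (set ys)"
    unfolding L_def ys(2) m_def
    using sum.reindex_bij_betw[OF bij_betw_nth[OF assms(5) refl refl], of "dist Dp"] by simp
  have le_max: "dist Dp y \<le> L + Delta" if "y \<in> set ys" for y
    using that unfolding Delta_def m_def by (auto simp: in_set_conv_nth intro!: Max_ge)
  have "mu * real m < card {y\<in>set ys. t \<le> dist Dp y}"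
    unfolding t_def L ys(2)[symmetric]
    using ys mu le_max by (intro card_ge_mean_threshold_gt) (auto simp: L)
  also have "\<dots> = length zs"
    using assms(5) by (simp add: zs_def distinct_card[symmetric])
  finally have many: "mu * real m < length zs" .
  moreover have "0 \<le> mu * real m" using mu by simp
  ultimately have "zs \<noteq> []" by auto
  then have cost: "2 * t + path_length zs \<le> tour_cost Dp ys"
    unfolding zs_def by (rule tour_cost_ge_path_through_far_points)
  obtain W where "W \<subseteq> set zs" "card W = length zs - 1"
    "nearest_neighbour_sum W \<le> path_length zs"
    using exists_nearest_neighbour_sum_le_path_length[of zs] assms(5) by (auto simp: zs_def)
  then show ?thesis
    using many cost by (intro exI[of _ W])
      (auto simp: zs_def nearest_neighbour_sum_def t_def mu_def diff_diff_eq of_nat_diff)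
qed

end
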